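(* Let $p$ be a ProbNetKAT program, $S=\mathcal{S}[\![p]\!]$ and $U$ as defined in the context. Then for every $n\ge1$: (1) $(SU)^n = S^nU$; (2) $SU$ is an absorbing Markov chain whose absorbing states are exactly the states $(\emptyset,b)$ for $b\subseteq\mathsf{Pk}$.
   Context: $\mathsf{Pk}$ is a finite set of packets; $[\varphi]$ is the Iverson bracket. For a ProbNetKAT program $p$, $\mathcal{B}[\![p]\!]\in[0,1]^{2^{\mathsf{Pk}}\times 2^{\mathsf{Pk}}}$ is its stochastic matrix semantics ($\mathcal{B}[\![p]\!]_{ab}$ = probability of output set $b$ on input set $a$); in particular every program maps input $\emptyset$ to output $\emptyset$ with probability 1. The small-step matrix on states $(a,b)\in 2^{\mathsf{Pk}}\times 2^{\mathsf{Pk}}$ is $S_{(a,b),(a',b')}=[b'=b\cup a]\,\mathcal{B}[\![p]\!]_{a,a'}$. A state $(a,b)$ is saturated if whenever $(S^n)_{(a,b),(a',b')}>0$ for some $n\ge0$ we have $b'=b$. $U_{(a,b),(a',b')}=[b'=b][a'=\emptyset]$ if $(a,b)$ is saturated, and $[b'=b][a'=a]$ otherwise. A state $s$ of a Markov chain $T$ is absorbing if $T_{s,s'}=[s=s']$ for all $s'$; $T$ is an absorbing Markov chain if from every state some absorbing state is reachable ($T^n_{s,s'}>0$ for some $n\ge0$ and absorbing $s'$). *)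

theory Defs
  imports Complex_Main
begin

type_synonym 's mat = "'s \<Rightarrow> 's \<Rightarrow> real"

definition mmult :: "('s::finite) mat \<Rightarrow> 's mat \<Rightarrow> 's mat" where
  "mmult M N = (\<lambda>i k. \<Sum>j\<in>UNIV. M i j * N j k)"

definition mone :: "'s mat" where
  "mone = (\<lambda>i j. if i = j then 1 else 0)"

primrec mpow :: "('s::finite) mat \<Rightarrow> nat \<Rightarrow> 's mat" where
  "mpow M 0 = mone"
| "mpow M (Suc n) = mmult (mpow M n) M"

definition stochastic :: "('s::finite) mat \<Rightarrow> bool" where
  "stochastic M \<longleftrightarrow> (\<forall>i j. 0 \<le> M i j) \<and> (\<forall>i. (\<Sum>j\<in>UNIV. M i j) = 1)"

text \<open>Small-step matrix S built from the big-step matrix B = B[[p]].\<close>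
definition small_step :: "('pk::finite) set mat \<Rightarrow> ('pk set \<times> 'pk set) mat" where
  "small_step B = (\<lambda>(a, b) (a', b'). if b' = b \<union> a then B a a' else 0)"

definition saturated :: "('pk::finite) set mat \<Rightarrow> 'pk set \<times> 'pk set \<Rightarrow> bool" where
  "saturated B s \<longleftrightarrow>
     (\<forall>n s'. mpow (small_step B) n s s' > 0 \<longrightarrow> snd s' = snd s)"

definition U_mat :: "('pk::finite) set mat \<Rightarrow> ('pk set \<times> 'pk set) mat" where
  "U_mat B = (\<lambda>(a, b) (a', b').
      if saturated B (a, b) then (if b' = b \<and> a' = {} then 1 else 0)
      else (if b' = b \<and> a' = a then 1 else 0))"

definition absorbing_state :: "('s::finite) mat \<Rightarrow> 's \<Rightarrow> bool" where
  "absorbing_state T s \<longleftrightarrow> (\<forall>s'. T s s' = (if s = s' then 1 else 0))"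

definition absorbing_chain :: "('s::finite) mat \<Rightarrow> bool" where
  "absorbing_chain T \<longleftrightarrow> stochastic T \<and>
     (\<forall>s. \<exists>n s'. mpow T n s s' > 0 \<and> absorbing_state T s')"

end

theory Submission imports Defs begin

(* Saturation is inherited along S-paths, and (\<emptyset>, b) is saturated and absorbing for S.
   Hence from a saturated state (a, b) the chain SU jumps to (\<emptyset>, b) with probability 1;
   as U only redirects saturated states to exactly that state, U S U = S U, which telescopes
   to (SU)^n = S^n U. S-steps only enlarge the second component, so a reachable state whose
   second component has maximal size is saturated, and SU reaches some (\<emptyset>, b) from every
   state. Conversely an absorbing state of SU cannot change its second component along S, so
   it is saturated, and being fixed by SU its first component is empty. *)

definition nonneg_mat :: "('s::finite) mat \<Rightarrow> bool" where
  "nonneg_mat M \<longleftrightarrow> (\<forall>i j. 0 \<le> M i j)"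

definition reachable :: "('s::finite) mat \<Rightarrow> 's \<Rightarrow> 's \<Rightarrow> bool" where
  "reachable T s t \<longleftrightarrow> (\<exists>n. 0 < mpow T n s t)"

lemma mmult_assoc: "mmult (mmult L M) N = mmult L (mmult M N)"
proof (intro ext)
  fix i l
  have "mmult (mmult L M) N i l = (\<Sum>k\<in>UNIV. \<Sum>j\<in>UNIV. L i j * M j k * N k l)"
    by (simp add: mmult_def sum_distrib_right)
  also have "\<dots> = (\<Sum>j\<in>UNIV. \<Sum>k\<in>UNIV. L i j * M j k * N k l)"
    by (rule sum.swap)
  also have "\<dots> = mmult L (mmult M N) i l"
    by (simp add: mmult_def sum_distrib_left mult.assoc)
  finally show "mmult (mmult L M) N i l = mmult L (mmult M N) i l" .
qed

lemma mmult_point_mass_row: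
  assumes "\<And>j. M i j = (if c = j then 1 else 0)"
  shows "mmult M N i k = N c k"
proof -
  have "mmult M N i k = (\<Sum>j\<in>UNIV. if c = j then N j k else 0)"
    unfolding mmult_def assms by (intro sum.cong) auto
  then show ?thesis by simp
qed

lemma mmult_point_mass_col:
  assumes "\<And>j. N j k = (if j = c then 1 else 0)"
  shows "mmult M N i k = M i c"
proof -
  have "mmult M N i k = (\<Sum>j\<in>UNIV. if j = c then M i j else 0)"
    unfolding mmult_def assms by (intro sum.cong) auto
  then show ?thesis by simp
qed

lemma mmult_mone_left [simp]: "mmult mone M = M"
  by (intro ext mmult_point_mass_row) (simp add: mone_def)

lemma mmult_mone_right [simp]: "mmult M mone = M"
  by (intro ext mmult_point_mass_col) (simp add: mone_def)

lemma mpow_add: "mpow M (m + n) = mmult (mpow M m) (mpow M n)"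
  by (induction n) (simp_all add: mmult_assoc)

lemma nonneg_mat_mmult: "nonneg_mat M \<Longrightarrow> nonneg_mat N \<Longrightarrow> nonneg_mat (mmult M N)"
  unfolding nonneg_mat_def mmult_def by (auto intro: sum_nonneg)

lemma nonneg_mat_mone: "nonneg_mat mone"
  by (simp add: nonneg_mat_def mone_def)

lemma nonneg_mat_mpow: "nonneg_mat M \<Longrightarrow> nonneg_mat (mpow M n)"
  by (induction n) (simp_all add: nonneg_mat_mmult nonneg_mat_mone)

lemma mmult_ge_mult:
  "nonneg_mat M \<Longrightarrow> nonneg_mat N \<Longrightarrow> M i j * N j k \<le> mmult M N i k"
  unfolding mmult_def nonneg_mat_def by (rule member_le_sum) auto

lemma mmult_pos_iff:
  assumes "nonneg_mat M" "nonneg_mat N"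
  shows "0 < mmult M N i k \<longleftrightarrow> (\<exists>j. 0 < M i j \<and> 0 < N j k)"
proof
  assume "0 < mmult M N i k"
  then have "(\<Sum>j\<in>UNIV. M i j * N j k) \<noteq> 0"
    by (simp add: mmult_def)
  then obtain j where "M i j * N j k \<noteq> 0"
    by (meson sum.neutral)
  then show "\<exists>j. 0 < M i j \<and> 0 < N j k"
    using assms by (auto simp: nonneg_mat_def less_le)
next
  assume "\<exists>j. 0 < M i j \<and> 0 < N j k"
  then show "0 < mmult M N i k"
    using mmult_ge_mult[OF assms] by (meson mult_pos_pos order_less_le_trans)
qed

lemma stochastic_imp_nonneg_mat: "stochastic M \<Longrightarrow> nonneg_mat M"
  by (simp add: stochastic_def nonneg_mat_def)

lemma stochastic_mmult:
  assumes "stochastic M" "stochastic N"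
  shows "stochastic (mmult M N)"
proof -
  have "(\<Sum>k\<in>UNIV. mmult M N i k) = 1" for i
  proof -
    have "(\<Sum>k\<in>UNIV. mmult M N i k) = (\<Sum>j\<in>UNIV. M i j * (\<Sum>k\<in>UNIV. N j k))"
      unfolding mmult_def sum_distrib_left by (rule sum.swap)
    also have "\<dots> = 1"
      using assms by (simp add: stochastic_def)
    finally show ?thesis .
  qed
  moreover have "nonneg_mat (mmult M N)"
    using assms by (simp add: nonneg_mat_mmult stochastic_imp_nonneg_mat)
  ultimately show ?thesis
    by (simp add: stochastic_def nonneg_mat_def)
qed

lemma stochastic_eq_1_imp_eq_0:
  assumes "stochastic M" "M i j = 1" "k \<noteq> j"
  shows "M i k = 0"
proof -
  have "(\<Sum>x\<in>UNIV. M i x) = M i j + (\<Sum>x\<in>UNIV - {j}. M i x)"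
    by (simp add: sum.remove)
  then have "(\<Sum>x\<in>UNIV - {j}. M i x) = 0"
    using assms by (simp add: stochastic_def)
  then show ?thesis
    using assms by (subst (asm) sum_nonneg_eq_0_iff) (auto simp: stochastic_def)
qed

lemma absorbing_state_mpow:
  "absorbing_state T s \<Longrightarrow> mpow T n s u = (if s = u then 1 else 0)"
proof (induction n arbitrary: u)
  case 0
  then show ?case by (simp add: mone_def)
next
  case (Suc n)
  then have "mpow T (Suc n) s u = T s u"
    by (simp add: mmult_point_mass_row)
  with Suc.prems show ?case
    by (simp add: absorbing_state_def)
qed

lemma reachable_refl: "reachable T s s"
  unfolding reachable_def by (metis mpow.simps(1) mone_def zero_less_one)

lemma reachable_trans:
  "nonneg_mat T \<Longrightarrow> reachable T s t \<Longrightarrow> reachable T t u \<Longrightarrow> reachable T s u"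
  unfolding reachable_def by (metis mpow_add mmult_pos_iff nonneg_mat_mpow)

lemma stochastic_small_step:
  assumes "stochastic B"
  shows "stochastic (small_step B)"
proof -
  have "(\<Sum>t\<in>UNIV. small_step B (a, b) t) = 1" for a b
  proof -
    have "(\<Sum>t\<in>UNIV. small_step B (a, b) t)
        = (\<Sum>a'\<in>UNIV. \<Sum>b'\<in>UNIV. if b' = b \<union> a then B a a' else 0)"
      by (simp add: small_step_def flip: UNIV_Times_UNIV sum.cartesian_product)
    also have "\<dots> = 1"
      using assms by (simp add: stochastic_def)
    finally show ?thesis .
  qed
  moreover have "0 \<le> small_step B s t" for s t
    using assms by (auto simp: small_step_def stochastic_def split: prod.splits)
  ultimately show ?thesis
    by (simp add: stochastic_def)
qed

lemma small_step_pos_imp_snd: "0 < small_step B s t \<Longrightarrow> snd t = snd s \<union> fst s"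
  by (auto simp: small_step_def split: prod.splits if_splits)

lemma reachable_small_step_snd_mono:
  assumes "stochastic B" "reachable (small_step B) s t"
  shows "snd s \<subseteq> snd t"
proof -
  obtain n where "0 < mpow (small_step B) n s t"
    using assms(2) reachable_def by blast
  then show ?thesis
  proof (induction n arbitrary: t)
    case 0
    then show ?case by (simp add: mone_def split: if_splits)
  next
    case (Suc n)
    have "nonneg_mat (mpow (small_step B) n)" "nonneg_mat (small_step B)"
      using assms(1) by (simp_all add: nonneg_mat_mpow stochastic_imp_nonneg_mat stochastic_small_step)
    with Suc.prems obtain j where "0 < mpow (small_step B) n s j" "0 < small_step B j t"
      by (auto simp: mmult_pos_iff)
    with Suc.IH small_step_pos_imp_snd show ?case by fastforce
  qed
qed

lemma saturated_iff_reachable: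
  "saturated B s \<longleftrightarrow> (\<forall>t. reachable (small_step B) s t \<longrightarrow> snd t = snd s)"
  by (auto simp: saturated_def reachable_def)

lemma saturated_reachable:
  assumes "stochastic B" "saturated B s" "reachable (small_step B) s t"
  shows "saturated B t"
  using assms reachable_trans[OF stochastic_imp_nonneg_mat[OF stochastic_small_step]]
  by (metis saturated_iff_reachable)

lemma ex_reachable_saturated:
  fixes B :: "('pk::finite) set mat"
  assumes "stochastic B"
  obtains t where "reachable (small_step B) s t" "saturated B t"
proof -
  obtain t where reach: "reachable (small_step B) s t"
    and max: "\<And>u. reachable (small_step B) s u \<Longrightarrow> card (snd u) \<le> card (snd t)"
    using Lattices_Big.ex_has_greatest_nat[of "reachable (small_step B) s" s "card \<circ> snd"
        "Suc (card (UNIV :: 'pk set))"]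
    by (auto simp: reachable_refl le_imp_less_Suc card_mono)
  have "snd u = snd t" if "reachable (small_step B) t u" for u
  proof (rule card_seteq[symmetric])
    show "snd t \<subseteq> snd u"
      using assms that by (rule reachable_small_step_snd_mono)
    show "card (snd u) \<le> card (snd t)"
      using assms reach that
      by (meson max reachable_trans stochastic_imp_nonneg_mat stochastic_small_step)
  qed simp
  with reach show ?thesis
    by (simp add: that saturated_iff_reachable)
qed

lemma absorbing_state_small_step_empty:
  assumes "stochastic B" "B {} {} = 1"
  shows "absorbing_state (small_step B) ({}, b)"
proof -
  have "B {} a' = 0" if "a' \<noteq> {}" for a'
    using stochastic_eq_1_imp_eq_0[OF assms] that .
  with assms(2) show ?thesis
    by (auto simp: absorbing_state_def small_step_def)
qed

lemma saturated_empty: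
  assumes "stochastic B" "B {} {} = 1"
  shows "saturated B ({}, b)"
  using absorbing_state_mpow[OF absorbing_state_small_step_empty[OF assms]]
  by (simp add: saturated_def)

lemma stochastic_U_mat: "stochastic (U_mat B)"
proof -
  have "(\<Sum>t\<in>UNIV. U_mat B s t) = 1" for s
  proof -
    obtain a b where s: "s = (a, b)" by (cases s)
    let ?u = "if saturated B (a, b) then ({}, b) else (a, b)"
    have "(\<Sum>t\<in>UNIV. U_mat B s t) = (\<Sum>t\<in>UNIV. if ?u = t then 1 else 0)"
      by (intro sum.cong) (auto simp: s U_mat_def split: prod.splits)
    then show ?thesis by simp
  qed
  moreover have "0 \<le> U_mat B s t" for s t
    by (auto simp: U_mat_def split: prod.splits)
  ultimately show ?thesis
    by (simp add: stochastic_def)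
qed

lemma U_mat_saturated:
  "saturated B s \<Longrightarrow> U_mat B s u = (if ({}, snd s) = u then 1 else 0)"
  by (auto simp: U_mat_def split: prod.splits)

lemma U_mat_not_saturated:
  "\<not> saturated B s \<Longrightarrow> U_mat B s u = (if s = u then 1 else 0)"
  by (auto simp: U_mat_def split: prod.splits)

lemma small_step_U_mat_saturated:
  assumes "stochastic B" "saturated B s"
  shows "mmult (small_step B) (U_mat B) s u = (if ({}, snd s) = u then 1 else 0)"
proof -
  have summand: "small_step B s t * U_mat B t u
      = small_step B s t * (if ({}, snd s) = u then 1 else 0)" for t
  proof (cases "0 < small_step B s t")
    case True
    then have reach: "reachable (small_step B) s t"
      unfolding reachable_def by (metis mpow.simps mmult_mone_left)
    with assms have "saturated B t"
      by (rule saturated_reachable)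
    moreover have "snd t = snd s"
      using assms(2) reach saturated_iff_reachable by blast
    ultimately show ?thesis
      by (simp add: U_mat_saturated)
  next
    case False
    then have "small_step B s t = 0"
      using stochastic_imp_nonneg_mat[OF stochastic_small_step[OF assms(1)]]
      by (metis nonneg_mat_def less_eq_real_def)
    then show ?thesis by simp
  qed
  have "mmult (small_step B) (U_mat B) s u
      = (\<Sum>t\<in>UNIV. small_step B s t) * (if ({}, snd s) = u then 1 else 0)"
    unfolding mmult_def summand by (rule sum_distrib_right[symmetric])
  moreover have "(\<Sum>t\<in>UNIV. small_step B s t) = 1"
    using stochastic_small_step[OF assms(1)] unfolding stochastic_def by blast
  ultimately show ?thesis
    by simp
qed

lemma U_mat_mmult_small_step_U_mat:
  assumes "stochastic B" "B {} {} = 1"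
  shows "mmult (U_mat B) (mmult (small_step B) (U_mat B)) = mmult (small_step B) (U_mat B)"
proof (intro ext)
  fix s u
  show "mmult (U_mat B) (mmult (small_step B) (U_mat B)) s u = mmult (small_step B) (U_mat B) s u"
  proof (cases "saturated B s")
    case True
    then show ?thesis
      using small_step_U_mat_saturated[OF assms(1) saturated_empty[OF assms]]
        small_step_U_mat_saturated[OF assms(1) True]
      by (simp add: mmult_point_mass_row U_mat_saturated)
  next
    case False
    then show ?thesis
      by (simp add: mmult_point_mass_row U_mat_not_saturated)
  qed
qed

lemma mpow_small_step_U_mat:
  assumes "stochastic B" "B {} {} = 1"
  shows "mpow (mmult (small_step B) (U_mat B)) (Suc n) = mmult (mpow (small_step B) (Suc n)) (U_mat B)"
proof (induction n)
  case 0
  then show ?case by simp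
next
  case (Suc n)
  then show ?case
    by (simp add: mmult_assoc U_mat_mmult_small_step_U_mat[OF assms])
qed

lemma absorbing_state_small_step_U_mat_imp_saturated:
  assumes B: "stochastic B" "B {} {} = 1"
    and absorbing: "absorbing_state (mmult (small_step B) (U_mat B)) s"
  shows "saturated B s"
  unfolding saturated_def
proof (intro allI impI)
  fix n t
  assume "0 < mpow (small_step B) n s t"
  show "snd t = snd s"
  proof (cases n)
    case 0
    with \<open>0 < mpow (small_step B) n s t\<close> show ?thesis
      by (simp add: mone_def split: if_splits)
  next
    case (Suc m)
    define u where "u = (if saturated B t then ({}, snd t) else t)"
    have "U_mat B t u = 1"
      by (simp add: u_def U_mat_saturated U_mat_not_saturated)
    then have "0 < mmult (mpow (small_step B) n) (U_mat B) s u"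
      using \<open>0 < mpow (small_step B) n s t\<close> B(1)
      by (metis mmult_pos_iff nonneg_mat_mpow stochastic_U_mat stochastic_imp_nonneg_mat
          stochastic_small_step zero_less_one)
    then have "u = s"
      using mpow_small_step_U_mat[OF B, of m] absorbing_state_mpow[OF absorbing, of n u] Suc
      by (simp split: if_splits)
    moreover have "snd u = snd t"
      by (simp add: u_def)
    ultimately show ?thesis
      by simp
  qed
qed

lemma absorbing_state_small_step_U_mat_iff:
  assumes "stochastic B" "B {} {} = 1"
  shows "absorbing_state (mmult (small_step B) (U_mat B)) s \<longleftrightarrow> fst s = {}"
proof
  assume absorbing: "absorbing_state (mmult (small_step B) (U_mat B)) s"
  have "saturated B s"
    using assms absorbing by (rule absorbing_state_small_step_U_mat_imp_saturated)
  with assms(1) have "mmult (small_step B) (U_mat B) s s = (if ({}, snd s) = s then 1 else 0)"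
    by (rule small_step_U_mat_saturated)
  moreover have "mmult (small_step B) (U_mat B) s s = 1"
    using absorbing[unfolded absorbing_state_def, rule_format, of s] by simp
  ultimately have "({}, snd s) = s"
    by (simp split: if_splits)
  then show "fst s = {}"
    by (metis fst_conv)
next
  assume "fst s = {}"
  then show "absorbing_state (mmult (small_step B) (U_mat B)) s"
    using small_step_U_mat_saturated[OF assms(1) saturated_empty[OF assms, of "snd s"]]
    by (cases s) (simp add: absorbing_state_def)
qed

lemma absorbing_chain_small_step_U_mat:
  assumes "stochastic B" "B {} {} = 1"
  shows "absorbing_chain (mmult (small_step B) (U_mat B))"
  unfolding absorbing_chain_def
proof (intro conjI allI)
  show "stochastic (mmult (small_step B) (U_mat B))"
    by (simp add: stochastic_mmult stochastic_small_step[OF assms(1)] stochastic_U_mat)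
next
  fix s
  obtain t where "reachable (small_step B) s t" and sat: "saturated B t"
    using ex_reachable_saturated[OF assms(1)] .
  then obtain n where "0 < mpow (small_step B) n s t"
    by (auto simp: reachable_def)
  moreover have "mmult (small_step B) (U_mat B) t ({}, snd t) = 1"
    using small_step_U_mat_saturated[OF assms(1) sat] by simp
  moreover have "mpow (mmult (small_step B) (U_mat B)) (Suc n)
      = mmult (mpow (small_step B) n) (mmult (small_step B) (U_mat B))"
    using mpow_small_step_U_mat[OF assms, of n] by (simp add: mmult_assoc)
  ultimately have "0 < mpow (mmult (small_step B) (U_mat B)) (Suc n) s ({}, snd t)"
    using assms(1)
    by (metis mmult_pos_iff nonneg_mat_mpow stochastic_imp_nonneg_mat stochastic_mmult
        stochastic_small_step stochastic_U_mat zero_less_one)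
  moreover have "absorbing_state (mmult (small_step B) (U_mat B)) ({}, snd t)"
    using absorbing_state_small_step_U_mat_iff[OF assms] by simp
  ultimately show "\<exists>n s'. 0 < mpow (mmult (small_step B) (U_mat B)) n s s'
      \<and> absorbing_state (mmult (small_step B) (U_mat B)) s'"
    by blast
qed

theorem proposition4p6:
  fixes B :: "('pk::finite) set \<Rightarrow> 'pk set \<Rightarrow> real"
  assumes "stochastic B"
    and "B {} {} = 1"
  shows "(\<forall>n\<ge>1. mpow (mmult (small_step B) (U_mat B)) n
                 = mmult (mpow (small_step B) n) (U_mat B))
       \<and> absorbing_chain (mmult (small_step B) (U_mat B))
       \<and> (\<forall>s. absorbing_state (mmult (small_step B) (U_mat B)) s \<longleftrightarrow> fst s = {})"
proof (intro conjI allI impI)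
  show "mpow (mmult (small_step B) (U_mat B)) n = mmult (mpow (small_step B) n) (U_mat B)"
    if "n \<ge> 1" for n
    using that mpow_small_step_U_mat[OF assms, of "n - 1"] by simp
qed (use assms absorbing_chain_small_step_U_mat absorbing_state_small_step_U_mat_iff in blast)+

end
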